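(* Let $n=2^\ell$, let $S=\{u_1,\dots,u_m\}\subseteq\mathbb{F}_2^d\setminus\{0\}$ be a set of $m$ distinct nonzero vectors, let $h:\mathbb{F}_2^d\to\mathbb{F}_2^\ell$ be a uniformly random linear map, fix $y\in\mathbb{F}_2^\ell$, let $Z_y:=|\{i:h(u_i)=y\}|$ and $\lambda:=m/n$. Then for every integer $a\ge1$, \[ \Pr[Z_y>2^a-2]\le\gamma^{-1}\lambda^a2^{-a^2}, \] where $\gamma:=\prod_{j=1}^\infty(1-2^{-j})$.
   Context: A uniformly random linear map is chosen uniformly among all linear maps $\mathbb{F}_2^d\to\mathbb{F}_2^\ell$. *)

theory Defs
  imports "HOL-Analysis.Analysis" "HOL-Library.Z2"
begin

text \<open>Vectors of F_2^d, represented as functions nat => bit vanishing at indices >= d.\<close>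
definition f2vecs :: "nat \<Rightarrow> (nat \<Rightarrow> bit) set" where
  "f2vecs d = {v. \<forall>i\<ge>d. v i = 0}"

text \<open>Linear maps F_2^d -> F_2^l, made extensional (value 0 outside F_2^d) so the set is finite.\<close>
definition f2_linear_maps :: "nat \<Rightarrow> nat \<Rightarrow> ((nat \<Rightarrow> bit) \<Rightarrow> (nat \<Rightarrow> bit)) set" where
  "f2_linear_maps d l = {h.
     (\<forall>x\<in>f2vecs d. h x \<in> f2vecs l) \<and>
     (\<forall>x\<in>f2vecs d. \<forall>y\<in>f2vecs d. h (\<lambda>i. x i + y i) = (\<lambda>i. h x i + h y i)) \<and>
     (\<forall>c::bit. \<forall>x\<in>f2vecs d. h (\<lambda>i. c * x i) = (\<lambda>i. c * h x i)) \<and>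
     (\<forall>x. x \<notin> f2vecs d \<longrightarrow> h x = (\<lambda>_. 0))}"

definition gamma2 :: real where
  "gamma2 = (\<Prod>j. 1 - (1/2) ^ Suc j)"

end

(*
  If Z_y >= 2^a - 1, then h maps at least 2^a - 1 distinct nonzero vectors u_i to y. Since the
  span of j independent vectors contains only 2^j - 1 nonzero vectors, a greedy choice yields at
  least c = prod_{j<a} (2^a - 2^j) ordered a-tuples of linearly independent vectors among them.
  Conversely, a fixed independent a-tuple is sent to y by at most a 2^(-l a) fraction of all
  linear maps, and there are at most m^a such tuples. Double counting the pairs (h, tuple) gives
  Pr[Z_y > 2^a - 2] * c <= m^a 2^(-l a), and c = 2^(a^2) prod_{j=1}^a (1 - 2^(-j)) >= gamma 2^(a^2).
*)

theory Submission
  imports Defs "HOL-Library.Function_Algebras"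
begin

lemma bit_UNIV: "(UNIV :: bit set) = {0, 1}"
  by (auto intro: bit.exhaust)

lemma card_bit_UNIV: "card (UNIV :: bit set) = 2"
  by (simp add: bit_UNIV)

(* Keep arithmetic on bit as field arithmetic rather than rewriting it to Boolean connectives. *)
declare mult_bit_eq_and [simp del] add_bit_eq_xor [simp del]

lemma card_image_filter:
  assumes "inj_on u A"
  shows "card {v \<in> u ` A. P v} = card {i \<in> A. P (u i)}"
proof -
  have "{v \<in> u ` A. P v} = u ` {i \<in> A. P (u i)}"
    by auto
  moreover have "inj_on u {i \<in> A. P (u i)}"
    using assms by (rule inj_on_subset) auto
  ultimately show ?thesis
    by (simp add: card_image)
qed

lemma (in module) finite_span_card_le:
  assumes "finite (UNIV :: 'a set)" and "finite B"
  shows "finite (span B)" and "card (span B) \<le> CARD('a) ^ card B"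
proof -
  define comb where "comb c = (\<Sum>v\<in>B. scale (c v) v)" for c
  have "span B = comb ` (B \<rightarrow>\<^sub>E UNIV)"
  proof -
    have "comb c \<in> comb ` (B \<rightarrow>\<^sub>E UNIV)" for c
    proof
      show "comb c = comb (restrict c B)"
        unfolding comb_def by (rule sum.cong) auto
    qed simp
    then show ?thesis
      unfolding span_finite[OF assms(2)] comb_def[symmetric] by blast
  qed
  then show "finite (span B)" and "card (span B) \<le> CARD('a) ^ card B"
    using assms card_image_le[of "B \<rightarrow>\<^sub>E UNIV" comb]
    by (auto simp: finite_PiE card_PiE)
qed

definition (in vector_space) independent_tuples :: "nat \<Rightarrow> 'b set \<Rightarrow> (nat \<Rightarrow> 'b) set" where
  "independent_tuples k V =
     {w \<in> {..<k} \<rightarrow>\<^sub>E V. inj_on w {..<k} \<and> independent (w ` {..<k})}"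

lemma (in vector_space) finite_independent_tuples:
  "finite V \<Longrightarrow> finite (independent_tuples k V)"
  by (rule finite_subset[of _ "{..<k} \<rightarrow>\<^sub>E V"]) (auto simp: independent_tuples_def finite_PiE)

lemma (in vector_space) card_independent_tuples_le:
  assumes "finite V"
  shows "card (independent_tuples k V) \<le> card V ^ k"
proof -
  have "card (independent_tuples k V) \<le> card ({..<k} \<rightarrow>\<^sub>E V)"
    using assms by (intro card_mono) (auto simp: independent_tuples_def finite_PiE)
  then show ?thesis
    by (simp add: card_PiE)
qed

lemma (in vector_space) independent_tuples_extend:
  assumes w: "w \<in> independent_tuples k V" and v: "v \<in> V - span (w ` {..<k})"
  shows "w(k := v) \<in> independent_tuples (Suc k) V"
proof -
  have "v \<notin> w ` {..<k}"
    using v by (metis DiffE span_base)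
  then have "inj_on (w(k := v)) {..<Suc k}"
    using w by (simp add: lessThan_Suc inj_on_insert inj_on_fun_updI independent_tuples_def)
  moreover have "w(k := v) ` {..<Suc k} = insert v (w ` {..<k})"
  proof -
    have "w(k := v) ` {..<k} = w ` {..<k}"
      by (intro image_cong) auto
    then show ?thesis
      unfolding lessThan_Suc image_insert fun_upd_same by (rule arg_cong)
  qed
  moreover have "w(k := v) \<in> {..<Suc k} \<rightarrow>\<^sub>E V"
    using w v unfolding lessThan_Suc by (intro PiE_fun_upd) (auto simp: independent_tuples_def)
  ultimately show ?thesis
    using w v by (simp add: independent_tuples_def independent_insertI)
qed

lemma (in vector_space) card_diff_span_ge:
  assumes "finite (UNIV :: 'a set)" and "finite V" and "0 \<notin> V" and "finite S"
  shows "card V + 1 - CARD('a) ^ card S \<le> card (V - span S)"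
proof -
  note span = finite_span_card_le[OF assms(1,4)]
  have "card (V \<inter> span S) \<le> card (span S - {0})"
    using assms(3) span(1) by (intro card_mono) auto
  also have "\<dots> = card (span S) - 1"
    using span(1) span_zero by (simp add: card_Diff_singleton)
  finally have "card (V \<inter> span S) + 1 \<le> CARD('a) ^ card S"
    using span card_gt_0_iff[of "span S"] span_zero by fastforce
  moreover have "card V = card (V \<inter> span S) + card (V - span S)"
    using assms(2) by (rule card_Int_Diff)
  ultimately show ?thesis
    by linarith
qed

lemma (in vector_space) card_independent_tuples_Suc_ge:
  assumes "finite (UNIV :: 'a set)" and "finite V" and "0 \<notin> V"
  shows "card (independent_tuples k V) * (card V + 1 - CARD('a) ^ k)
           \<le> card (independent_tuples (Suc k) V)"
proof -
  let ?T = "independent_tuples k V"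
  define ext where "ext w = V - span (w ` {..<k})" for w
  have "card V + 1 - CARD('a) ^ k \<le> card (ext w)" if "w \<in> ?T" for w
    using card_diff_span_ge[OF assms, of "w ` {..<k}"] that card_image[of w "{..<k}"]
    by (simp add: ext_def independent_tuples_def)
  then have "card ?T * (card V + 1 - CARD('a) ^ k) \<le> (\<Sum>w\<in>?T. card (ext w))"
    using sum_mono[of ?T "\<lambda>_. card V + 1 - CARD('a) ^ k" "\<lambda>w. card (ext w)"] by simp
  also have "\<dots> = card (Sigma ?T ext)"
    using assms(2) finite_independent_tuples by (simp add: ext_def)
  also have "\<dots> = card ((\<lambda>(w, v). w(k := v)) ` Sigma ?T ext)"
  proof (rule card_image[symmetric], rule inj_onI, clarify)
    fix w v w' v'
    assume "w \<in> ?T" "w' \<in> ?T" and eq: "w(k := v) = w'(k := v')"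
    then have "w \<in> {..<k} \<rightarrow>\<^sub>E V" "w' \<in> {..<k} \<rightarrow>\<^sub>E V"
      by (auto simp: independent_tuples_def)
    moreover have "w i = w' i" if "i < k" for i
      using fun_cong[OF eq, of i] that by simp
    ultimately show "w = w' \<and> v = v'"
      using fun_cong[OF eq, of k] by (auto intro: PiE_ext)
  qed
  also have "\<dots> \<le> card (independent_tuples (Suc k) V)"
    using independent_tuples_extend assms(2) finite_independent_tuples
    by (intro card_mono) (auto simp: ext_def)
  finally show ?thesis .
qed

lemma (in vector_space) card_independent_tuples_ge:
  assumes "finite (UNIV :: 'a set)" and "finite V" and "0 \<notin> V"
  shows "(\<Prod>j<k. card V + 1 - CARD('a) ^ j) \<le> card (independent_tuples k V)"
proof (induction k)
  case 0
  have "independent_tuples 0 V = {\<lambda>_. undefined}"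
    by (auto simp: independent_tuples_def independent_empty)
  then show ?case
    by simp
next
  case (Suc k)
  then show ?case
    using card_independent_tuples_Suc_ge[OF assms, of k]
    by (metis (no_types, lifting) prod.lessThan_Suc mult_le_mono1 order_trans)
qed

interpretation F2: vector_space "\<lambda>(c::bit) (x::nat \<Rightarrow> bit) i. c * x i"
  by unfold_locales (auto simp: fun_eq_iff algebra_simps)

interpretation F2_pair: vector_space_pair
  "\<lambda>(c::bit) (x::nat \<Rightarrow> bit) i. c * x i" "\<lambda>(c::bit) (x::nat \<Rightarrow> bit) i. c * x i"
  by unfold_locales

lemma f2vecs_eq_image: "f2vecs l = (\<lambda>w i. if i < l then w i else 0) ` ({..<l} \<rightarrow>\<^sub>E UNIV)"
proof
  show "f2vecs l \<subseteq> (\<lambda>w i. if i < l then w i else 0) ` ({..<l} \<rightarrow>\<^sub>E UNIV)"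
  proof
    fix v assume "v \<in> f2vecs l"
    then have "v = (\<lambda>i. if i < l then restrict v {..<l} i else 0)"
      by (simp add: f2vecs_def fun_eq_iff)
    moreover have "restrict v {..<l} \<in> {..<l} \<rightarrow>\<^sub>E UNIV"
      by simp
    ultimately show "v \<in> (\<lambda>w i. if i < l then w i else 0) ` ({..<l} \<rightarrow>\<^sub>E UNIV)"
      by (rule image_eqI)
  qed
qed (simp add: f2vecs_def image_subset_iff)

lemma finite_f2vecs: "finite (f2vecs l)"
  unfolding f2vecs_eq_image by (intro finite_imageI finite_PiE) (simp_all add: bit_UNIV)

lemma card_f2vecs: "card (f2vecs l) = 2 ^ l"
proof -
  have "inj_on (\<lambda>w i. if i < l then w i else 0) ({..<l} \<rightarrow>\<^sub>E UNIV)"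
  proof (rule inj_onI, rule PiE_ext)
    fix w w' i
    assume "(\<lambda>i. if i < l then w i else 0) = (\<lambda>i. if i < l then w' i else 0)" and "i \<in> {..<l}"
    then show "w i = w' i"
      by (metis (mono_tags) lessThan_iff)
  qed
  then have "card (f2vecs l) = card ({..<l} \<rightarrow>\<^sub>E (UNIV :: bit set))"
    unfolding f2vecs_eq_image by (rule card_image)
  then show ?thesis
    by (simp add: card_PiE card_bit_UNIV)
qed

lemma subspace_f2vecs: "F2.subspace (f2vecs l)"
  by (simp add: F2.subspace_def f2vecs_def)

lemma finite_f2_linear_maps: "finite (f2_linear_maps d l)"
proof -
  have "f2_linear_maps d l \<subseteq>
      {h. \<forall>x. (x \<in> f2vecs d \<longrightarrow> h x \<in> f2vecs l) \<and> (x \<notin> f2vecs d \<longrightarrow> h x = 0)}"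
    by (auto simp: f2_linear_maps_def zero_fun_def)
  then show ?thesis
    by (rule finite_subset) (intro finite_set_of_finite_funs finite_f2vecs)
qed

lemma zero_in_f2_linear_maps: "0 \<in> f2_linear_maps d l"
  by (simp add: f2_linear_maps_def f2vecs_def zero_fun_def)

lemma add_in_f2_linear_maps:
  assumes "h \<in> f2_linear_maps d l" and "g \<in> f2_linear_maps d l"
  shows "h + g \<in> f2_linear_maps d l"
  using assms by (simp add: f2_linear_maps_def f2vecs_def fun_eq_iff algebra_simps)

lemma f2_linear_maps_extend:
  assumes "F2.independent B" and "B \<subseteq> f2vecs d" and "z ` B \<subseteq> f2vecs l"
  shows "\<exists>h\<in>f2_linear_maps d l. \<forall>b\<in>B. h b = z b"
proof -
  define g where "g = F2_pair.construct B z"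
  interpret g: Vector_Spaces.linear "\<lambda>(c::bit) (x::nat \<Rightarrow> bit) i. c * x i"
      "\<lambda>(c::bit) (x::nat \<Rightarrow> bit) i. c * x i" g
    unfolding g_def by (rule F2_pair.linear_construct[OF assms(1)])
  have g_range: "g x \<in> f2vecs l" for x
    unfolding g_def
    by (rule subsetD[OF F2.span_minimal[OF assms(3) subspace_f2vecs]
          F2_pair.construct_in_span[OF assms(1)]])
  define h where "h x = (if x \<in> f2vecs d then g x else 0)" for x
  have "h \<in> f2_linear_maps d l"
    unfolding f2_linear_maps_def
  proof (intro CollectI conjI ballI allI impI)
    fix x y assume "x \<in> f2vecs d" "y \<in> f2vecs d"
    then show "h (\<lambda>i. x i + y i) = (\<lambda>i. h x i + h y i)"
      using g.add[of x y] by (auto simp: h_def f2vecs_def plus_fun_def)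
  next
    fix c :: bit and x assume "x \<in> f2vecs d"
    then show "h (\<lambda>i. c * x i) = (\<lambda>i. c * h x i)"
      using g.scale[of c x] by (auto simp: h_def f2vecs_def)
  qed (auto simp: h_def g_range)
  moreover have "\<forall>b\<in>B. h b = z b"
    using assms(2) F2_pair.construct_basis[OF assms(1)] by (auto simp: h_def g_def)
  ultimately show ?thesis
    by blast
qed

lemma card_f2_linear_maps_agreeing_le:
  assumes "F2.independent B" and "B \<subseteq> f2vecs d"
  shows "card {h \<in> f2_linear_maps d l. \<forall>b\<in>B. h b = z b} * 2 ^ (l * card B)
           \<le> card (f2_linear_maps d l)"
proof -
  let ?L = "f2_linear_maps d l"
  let ?Fib = "{h \<in> ?L. \<forall>b\<in>B. h b = z b}"
  let ?W = "B \<rightarrow>\<^sub>E f2vecs l"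
  have "\<exists>g\<in>?L. \<forall>b\<in>B. g b = w b" if "w \<in> ?W" for w
    using that by (intro f2_linear_maps_extend[OF assms]) (auto simp: PiE_mem)
  then obtain g where g: "\<And>w. w \<in> ?W \<Longrightarrow> g w \<in> ?L \<and> (\<forall>b\<in>B. g w b = w b)"
    by metis
  have "h = h' \<and> w = w'"
    if h: "h \<in> ?Fib" and w: "w \<in> ?W" and h': "h' \<in> ?Fib" and w': "w' \<in> ?W"
      and eq: "h + g w = h' + g w'" for h w h' w'
  proof -
    have "w = w'"
    proof (rule PiE_ext[OF w w'])
      fix b assume "b \<in> B"
      then have "z b + w b = z b + w' b"
        using fun_cong[OF eq, of b] h h' g[OF w] g[OF w'] by simp
      then show "w b = w' b"
        by simp
    qed
    with eq show ?thesis
      by simp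
  qed
  then have "inj_on (\<lambda>(h, w). h + g w) (?Fib \<times> ?W)"
    by (intro inj_onI) auto
  moreover have "(\<lambda>(h, w). h + g w) ` (?Fib \<times> ?W) \<subseteq> ?L"
    using add_in_f2_linear_maps g by auto
  ultimately have "card (?Fib \<times> ?W) \<le> card ?L"
    using finite_f2_linear_maps by (rule card_inj_on_le)
  moreover have "card ?W = 2 ^ (l * card B)"
    using finite_subset[OF assms(2) finite_f2vecs] by (simp add: card_PiE card_f2vecs power_mult)
  ultimately show ?thesis
    by (simp add: card_cartesian_product)
qed

lemma card_f2_independent_tuples_ge:
  assumes "finite V" and "0 \<notin> V" and "2 ^ a - 1 \<le> card V"
  shows "(\<Prod>j<a. 2 ^ a - 2 ^ j) \<le> card (F2.independent_tuples a V)"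
proof -
  have "(\<Prod>j<a. (2::nat) ^ a - 2 ^ j) \<le> (\<Prod>j<a. card V + 1 - CARD(bit) ^ j)"
    using assms(3) by (intro prod_mono) (auto simp: card_bit_UNIV)
  also have "\<dots> \<le> card (F2.independent_tuples a V)"
    using assms(1,2) by (intro F2.card_independent_tuples_ge) (simp_all add: bit_UNIV)
  finally show ?thesis .
qed

lemma card_maps_with_large_fibre_le:
  assumes "U \<subseteq> f2vecs d" and "0 \<notin> U"
  shows "card {h \<in> f2_linear_maps d l. 2 ^ a - 1 \<le> card {v \<in> U. h v = y}}
           * (\<Prod>j<a. 2 ^ a - 2 ^ j) * 2 ^ (l * a)
         \<le> card U ^ a * card (f2_linear_maps d l)"
proof -
  let ?L = "f2_linear_maps d l"
  let ?E = "{h \<in> ?L. 2 ^ a - 1 \<le> card {v \<in> U. h v = y}}"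
  let ?P = "F2.independent_tuples a U"
  let ?c = "\<Prod>j<a. (2::nat) ^ a - 2 ^ j"
  define hits where "hits h w \<longleftrightarrow> (\<forall>b\<in>w ` {..<a}. h b = y)"
    for h :: "(nat \<Rightarrow> bit) \<Rightarrow> nat \<Rightarrow> bit" and w :: "nat \<Rightarrow> nat \<Rightarrow> bit"
  have U: "finite U"
    using assms(1) finite_f2vecs by (rule finite_subset)
  have "?c \<le> card {w \<in> ?P. hits h w}" if "h \<in> ?E" for h
  proof -
    have "?c \<le> card (F2.independent_tuples a {v \<in> U. h v = y})"
      using that U assms by (intro card_f2_independent_tuples_ge) auto
    also have "F2.independent_tuples a {v \<in> U. h v = y} = {w \<in> ?P. hits h w}"
      by (auto simp: F2.independent_tuples_def hits_def PiE_iff)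
    finally show ?thesis .
  qed
  then have "card ?E * ?c \<le> (\<Sum>h\<in>?E. card {w \<in> ?P. hits h w})"
    using sum_mono[of ?E "\<lambda>_. ?c"] by simp
  also have "\<dots> \<le> (\<Sum>h\<in>?L. card {w \<in> ?P. hits h w})"
    by (rule sum_mono2[OF finite_f2_linear_maps]) auto
  also have "\<dots> = (\<Sum>w\<in>?P. card {h \<in> ?L. hits h w})"
    using sum.swap_restrict[OF finite_f2_linear_maps[of d l] F2.finite_independent_tuples[OF U, of a],
        where g = "\<lambda>_ _. 1 :: nat" and R = hits] by simp
  finally have "card ?E * ?c * 2 ^ (l * a) \<le> (\<Sum>w\<in>?P. card {h \<in> ?L. hits h w}) * 2 ^ (l * a)"
    by (rule mult_le_mono1)
  also have "\<dots> = (\<Sum>w\<in>?P. card {h \<in> ?L. hits h w} * 2 ^ (l * a))"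
    by (rule sum_distrib_right)
  also have "\<dots> \<le> (\<Sum>w\<in>?P. card ?L)"
  proof (rule sum_mono)
    fix w assume "w \<in> ?P"
    then have "F2.independent (w ` {..<a})" "w ` {..<a} \<subseteq> f2vecs d" "card (w ` {..<a}) = a"
      using assms(1) by (auto simp: F2.independent_tuples_def card_image PiE_iff)
    then show "card {h \<in> ?L. hits h w} * 2 ^ (l * a) \<le> card ?L"
      using card_f2_linear_maps_agreeing_le[of "w ` {..<a}" d l "\<lambda>_. y"] by (simp add: hits_def)
  qed
  also have "\<dots> \<le> card U ^ a * card ?L"
    using F2.card_independent_tuples_le[OF U, of a] by simp
  finally show ?thesis .
qed

lemma convergent_prod_gamma2: "convergent_prod (\<lambda>j. 1 - (1/2::real) ^ Suc j)"
proof -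
  have "summable (\<lambda>j. (1/2::real) * (1/2) ^ j)"
    by (intro summable_mult summable_geometric) simp
  then show ?thesis
    by (intro abs_convergent_prod_imp_convergent_prod summable_imp_abs_convergent_prod) simp
qed

lemma gamma2_factor_pos: "0 < 1 - (1/2::real) ^ Suc n"
  using power_Suc_less_one[of "1/2::real" n] by simp

lemma gamma2_pos: "0 < gamma2"
  unfolding gamma2_def
  by (rule less_0_prodinf[OF convergent_prod_gamma2]) (rule gamma2_factor_pos)

lemma gamma2_le_prod: "gamma2 \<le> (\<Prod>j<a. 1 - (1/2::real) ^ Suc j)"
proof -
  have "(\<Prod>j. 1 - (1/2::real) ^ Suc j) \<le> (\<Prod>j<a. 1 - (1/2::real) ^ Suc j)"
    by (rule prod_ge_prodinf[OF convergent_prod_has_prod[OF convergent_prod_gamma2]])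
      (rule less_imp_le[OF gamma2_factor_pos], simp)
  then show ?thesis
    unfolding gamma2_def .
qed

lemma prod_pow2_diff_eq:
  "real (\<Prod>j<a. (2::nat) ^ a - 2 ^ j) = 2 ^ (a\<^sup>2) * (\<Prod>j<a. 1 - (1/2::real) ^ Suc j)"
proof -
  have "real (\<Prod>j<a. (2::nat) ^ a - 2 ^ j) = (\<Prod>j<a. (2::real) ^ a - 2 ^ j)"
    by (simp add: power_increasing)
  also have "\<dots> = (\<Prod>j<a. 2 ^ a - 2 ^ (a - Suc j))"
    by (rule prod.nat_diff_reindex[symmetric])
  also have "\<dots> = (\<Prod>j<a. 2 ^ a * (1 - (1/2) ^ Suc j))"
  proof (rule prod.cong[OF refl])
    fix j assume "j \<in> {..<a}"
    then have "a = (a - Suc j) + Suc j"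
      by simp
    then have "(2::real) ^ a = 2 ^ (a - Suc j) * 2 ^ Suc j"
      by (metis power_add)
    then show "(2::real) ^ a - 2 ^ (a - Suc j) = 2 ^ a * (1 - (1/2) ^ Suc j)"
      by (simp add: algebra_simps power_one_over)
  qed
  also have "\<dots> = 2 ^ (a\<^sup>2) * (\<Prod>j<a. 1 - (1/2) ^ Suc j)"
    by (simp add: prod.distrib power_mult power2_eq_square)
  finally show ?thesis .
qed

lemma gamma2_pow2_le_prod_pow2_diff: "gamma2 * 2 ^ (a\<^sup>2) \<le> real (\<Prod>j<a. (2::nat) ^ a - 2 ^ j)"
  using gamma2_le_prod[of a] unfolding prod_pow2_diff_eq by simp

lemma pow2_minus_two_less_iff:
  assumes "a \<ge> 1"
  shows "2 ^ a - 2 < real k \<longleftrightarrow> 2 ^ a - 1 \<le> k"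
proof -
  have "(2::nat) \<le> 2 ^ a"
    using assms by (metis power_one_right power_increasing one_le_numeral)
  then have "(2::real) ^ a - 2 = real (2 ^ a - 2)"
    by (simp add: of_nat_diff)
  then show ?thesis
    using \<open>2 \<le> 2 ^ a\<close> by (simp only: of_nat_less_iff) arith
qed

theorem corollaryB2:
  fixes d l m :: nat and u :: "nat \<Rightarrow> (nat \<Rightarrow> bit)" and y :: "nat \<Rightarrow> bit" and a :: nat
  assumes "inj_on u {..<m}"
    and "\<forall>i<m. u i \<in> f2vecs d \<and> u i \<noteq> (\<lambda>_. 0)"
    and "y \<in> f2vecs l"
    and "a \<ge> 1"
  shows "real (card {h \<in> f2_linear_maps d l. real (card {i. i < m \<and> h (u i) = y}) > 2 ^ a - 2})
           / real (card (f2_linear_maps d l))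
         \<le> (1 / gamma2) * (real m / 2 ^ l) ^ a * (1 / 2 ^ (a^2))"
proof -
  let ?L = "f2_linear_maps d l"
  let ?U = "u ` {..<m}"
  define E where "E = {h \<in> ?L. 2 ^ a - 1 \<le> card {v \<in> ?U. h v = y}}"
  define c where "c = (\<Prod>j<a. (2::nat) ^ a - 2 ^ j)"
  have E: "{h \<in> ?L. real (card {i. i < m \<and> h (u i) = y}) > 2 ^ a - 2} = E"
    using card_image_filter[OF assms(1)] pow2_minus_two_less_iff[OF assms(4)] by (simp add: E_def)
  have U: "?U \<subseteq> f2vecs d" "0 \<notin> ?U"
    using assms(2) by (auto simp: zero_fun_def)
  have "card E * c * (2 ^ l) ^ a \<le> m ^ a * card ?L"
    using card_maps_with_large_fibre_le[OF U, of l a y] card_image[OF assms(1)]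
    unfolding E_def c_def by (simp add: power_mult)
  then have count: "real (card E) * real c * (2 ^ l) ^ a \<le> real m ^ a * real (card ?L)"
    using of_nat_mono[where 'a = real] by fastforce
  have "real (card E) * (gamma2 * 2 ^ (a\<^sup>2)) * (2 ^ l) ^ a \<le> real (card E) * real c * (2 ^ l) ^ a"
    using gamma2_pow2_le_prod_pow2_diff[of a] unfolding c_def
    by (intro mult_right_mono mult_left_mono) simp_all
  also note count
  moreover have "0 < card ?L"
    using finite_f2_linear_maps zero_in_f2_linear_maps card_gt_0_iff by blast
  ultimately show ?thesis
    using gamma2_pos unfolding E
    by (simp add: field_simps power_divide)
qed

end
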